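(* Let $\Gamma$ be a strict two-player normal-form game whose preference graph has no sink (no node of out-degree $0$) and no directed cycle of length $4$. Then each player has at least $3$ strategies. Moreover, if both players have exactly $3$ strategies, then the preference graph of $\Gamma$ is isomorphic (as a directed graph; equivalently, equal up to renaming strategies and players) to Shapley's graph. In particular, Shapley's graph is the unique smallest two-player preference graph with neither a sink nor a $4$-cycle.
   Context: A finite normal-form game has players $1,\dots,N$, finite strategy sets $S_1,\dots,S_N$ and utilities $u_i:\prod_j S_j\to\mathbb{R}$. A strategy profile is an element of $Z=\prod_j S_j$; write $(s;p_{-i})$ for the profile obtained from $p$ by replacing player $i$'s strategy with $s$. Two distinct profiles are $i$-comparable if they differ only in the strategy of player $i$. The preference graph has node set $Z$ and, for each pair of $i$-comparable profiles $p,q$, an arc $p\to q$ whenever $u_i(q)\ge u_i(p)$ (so ties produce arcs in both directions). A game is strict if $u_i(p)\neq u_i(q)$ for every player $i$ and every pair of $i$-comparable profiles $p,q$. Shapley's graph is the preference graph of the $3\times 3$ game with rows $r_1,r_2,r_3$ (player 1) and columns $c_1,c_2,c_3$ (player 2) and payoff pairs $(u_1,u_2)$: row $r_1$: $(0,0),(2,1),(1,2)$; row $r_2$: $(1,2),(0,0),(2,1)$; row $r_3$: $(2,1),(1,2),(0,0)$. Explicitly, player 1's preferences are $r_3>r_2>r_1$ against $c_1$, $r_1>r_3>r_2$ against $c_2$, $r_2>r_1>r_3$ against $c_3$; player 2's preferences are $c_3>c_2>c_1$ against $r_1$, $c_1>c_3>c_2$ against $r_2$, $c_2>c_1>c_3$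 against $r_3$ (an arc points to the more preferred profile). *)

theory Defs
  imports Complex_Main
begin

definition two_player_game ::
  "'a set \<Rightarrow> 'b set \<Rightarrow> ('a \<times> 'b \<Rightarrow> real) \<Rightarrow> ('a \<times> 'b \<Rightarrow> real) \<Rightarrow> bool" where
  "two_player_game S1 S2 u1 u2 \<longleftrightarrow> finite S1 \<and> finite S2 \<and> S1 \<noteq> {} \<and> S2 \<noteq> {}"

definition comparable1 :: "'a \<times> 'b \<Rightarrow> 'a \<times> 'b \<Rightarrow> bool" where
  "comparable1 p q \<longleftrightarrow> fst p \<noteq> fst q \<and> snd p = snd q"

definition comparable2 :: "'a \<times> 'b \<Rightarrow> 'a \<times> 'b \<Rightarrow> bool" where
  "comparable2 p q \<longleftrightarrow> fst p = fst q \<and> snd p \<noteq> snd q"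

definition pref_arc ::
  "'a set \<Rightarrow> 'b set \<Rightarrow> ('a \<times> 'b \<Rightarrow> real) \<Rightarrow> ('a \<times> 'b \<Rightarrow> real) \<Rightarrow> 'a \<times> 'b \<Rightarrow> 'a \<times> 'b \<Rightarrow> bool" where
  "pref_arc S1 S2 u1 u2 p q \<longleftrightarrow> p \<in> S1 \<times> S2 \<and> q \<in> S1 \<times> S2 \<and>
     ((comparable1 p q \<and> u1 q \<ge> u1 p) \<or> (comparable2 p q \<and> u2 q \<ge> u2 p))"

definition strict_game ::
  "'a set \<Rightarrow> 'b set \<Rightarrow> ('a \<times> 'b \<Rightarrow> real) \<Rightarrow> ('a \<times> 'b \<Rightarrow> real) \<Rightarrow> bool" where
  "strict_game S1 S2 u1 u2 \<longleftrightarrow> (\<forall>p\<in>S1 \<times> S2. \<forall>q\<in>S1 \<times> S2.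
     (comparable1 p q \<longrightarrow> u1 p \<noteq> u1 q) \<and> (comparable2 p q \<longrightarrow> u2 p \<noteq> u2 q))"

definition has_sink :: "'v set \<Rightarrow> ('v \<Rightarrow> 'v \<Rightarrow> bool) \<Rightarrow> bool" where
  "has_sink V E \<longleftrightarrow> (\<exists>p\<in>V. \<not> (\<exists>q\<in>V. E p q))"

definition has_4_cycle :: "'v set \<Rightarrow> ('v \<Rightarrow> 'v \<Rightarrow> bool) \<Rightarrow> bool" where
  "has_4_cycle V E \<longleftrightarrow> (\<exists>a\<in>V. \<exists>b\<in>V. \<exists>c\<in>V. \<exists>d\<in>V. distinct [a, b, c, d] \<and>
      E a b \<and> E b c \<and> E c d \<and> E d a)"

definition digraph_iso ::
  "'v set \<Rightarrow> ('v \<Rightarrow> 'v \<Rightarrow> bool) \<Rightarrow> 'w set \<Rightarrow> ('w \<Rightarrow> 'w \<Rightarrow> bool) \<Rightarrow> bool" where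
  "digraph_iso V E W F \<longleftrightarrow> (\<exists>f. bij_betw f V W \<and> (\<forall>p\<in>V. \<forall>q\<in>V. E p q \<longleftrightarrow> F (f p) (f q)))"

text \<open>Shapley's game: rows r1,r2,r3 = 0,1,2 and columns c1,c2,c3 = 0,1,2.\<close>
definition shapley_S :: "nat set" where
  "shapley_S = {0, 1, 2}"

definition shapley_u1 :: "nat \<times> nat \<Rightarrow> real" where
  "shapley_u1 p = [[0, 2, 1], [1, 0, 2], [2, 1, 0]] ! fst p ! snd p"

definition shapley_u2 :: "nat \<times> nat \<Rightarrow> real" where
  "shapley_u2 p = [[0, 1, 2], [2, 0, 1], [1, 2, 0]] ! fst p ! snd p"

definition shapley_arc :: "nat \<times> nat \<Rightarrow> nat \<times> nat \<Rightarrow> bool" where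
  "shapley_arc = pref_arc shapley_S shapley_S shapley_u1 shapley_u2"

end

theory Submission
  imports Defs
begin

text \<open>
  Follow best replies, alternately for the two players: a0, then player 2's best reply b2 to a0,
  then player 1's best reply a1 to b2, and so on. Two consecutive mutual best replies would form
  a sink, and a walk of best replies returning to its start after four steps would form a
  4-cycle. Hence the walk a0, b2, a1, b0, a2, b1 visits three distinct strategies of each
  player. In the 3 \<times> 3 case these are all the strategies, the walk closes up after six steps,
  and the absence of 4-cycles then also fixes the middle entry of each column and row: the
  preferences are those of Shapley's game.
\<close>

lemma digraph_iso_pref_arc:
  assumes r: "bij_betw r S1 T1" and g: "bij_betw g S2 T2"
    and ord1: "\<And>x x' y. x \<in> S1 \<Longrightarrow> x' \<in> S1 \<Longrightarrow> y \<in> S2 \<Longrightarrow>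
      u1 (x, y) \<le> u1 (x', y) \<longleftrightarrow> v1 (r x, g y) \<le> v1 (r x', g y)"
    and ord2: "\<And>x y y'. x \<in> S1 \<Longrightarrow> y \<in> S2 \<Longrightarrow> y' \<in> S2 \<Longrightarrow>
      u2 (x, y) \<le> u2 (x, y') \<longleftrightarrow> v2 (r x, g y) \<le> v2 (r x, g y')"
  shows "digraph_iso (S1 \<times> S2) (pref_arc S1 S2 u1 u2) (T1 \<times> T2) (pref_arc T1 T2 v1 v2)"
  unfolding digraph_iso_def
proof (intro exI conjI ballI)
  show "bij_betw (map_prod r g) (S1 \<times> S2) (T1 \<times> T2)"
    using r g by (rule bij_betw_map_prod)
  fix p q assume "p \<in> S1 \<times> S2" "q \<in> S1 \<times> S2"
  then obtain x y x' y' where pq: "p = (x, y)" "q = (x', y')"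
    and mem: "x \<in> S1" "y \<in> S2" "x' \<in> S1" "y' \<in> S2" by auto
  have "r x = r x' \<longleftrightarrow> x = x'" "g y = g y' \<longleftrightarrow> y = y'"
    using mem r g by (auto simp: bij_betw_def dest: inj_onD)
  moreover have "r x \<in> T1" "r x' \<in> T1" "g y \<in> T2" "g y' \<in> T2"
    using mem r g by (auto simp: bij_betw_def)
  ultimately show "pref_arc S1 S2 u1 u2 p q \<longleftrightarrow>
      pref_arc T1 T2 v1 v2 (map_prod r g p) (map_prod r g q)"
    unfolding pq pref_arc_def comparable1_def comparable2_def
    using mem ord1[of x x' y] ord2[of x y y'] by auto
qed

lemma digraph_iso_shapley:
  fixes u1 u2 :: "'a \<times> 'b \<Rightarrow> real"
  assumes S1: "S1 = {a0, a1, a2}" and S2: "S2 = {b0, b1, b2}"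
    and "distinct [a0, a1, a2]" and "distinct [b0, b1, b2]"
    and col0: "u1 (a0, b0) < u1 (a1, b0)" "u1 (a1, b0) < u1 (a2, b0)"
    and col1: "u1 (a1, b1) < u1 (a2, b1)" "u1 (a2, b1) < u1 (a0, b1)"
    and col2: "u1 (a2, b2) < u1 (a0, b2)" "u1 (a0, b2) < u1 (a1, b2)"
    and row0: "u2 (a0, b0) < u2 (a0, b1)" "u2 (a0, b1) < u2 (a0, b2)"
    and row1: "u2 (a1, b1) < u2 (a1, b2)" "u2 (a1, b2) < u2 (a1, b0)"
    and row2: "u2 (a2, b2) < u2 (a2, b0)" "u2 (a2, b0) < u2 (a2, b1)"
  shows "digraph_iso (S1 \<times> S2) (pref_arc S1 S2 u1 u2) (shapley_S \<times> shapley_S) shapley_arc"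
  unfolding shapley_arc_def
proof (rule digraph_iso_pref_arc)
  define r where "r x = (if x = a0 then 0 else if x = a1 then 1 else (2::nat))" for x
  define g where "g y = (if y = b0 then 0 else if y = b1 then 1 else (2::nat))" for y
  have r: "r a0 = 0" "r a1 = 1" "r a2 = 2" and g: "g b0 = 0" "g b1 = 1" "g b2 = 2"
    using assms(3,4) by (auto simp: r_def g_def)
  show "bij_betw r S1 shapley_S" "bij_betw g S2 shapley_S"
    using assms(3,4) r g unfolding S1 S2 shapley_S_def bij_betw_def by auto
  show "u1 (x, y) \<le> u1 (x', y) \<longleftrightarrow> shapley_u1 (r x, g y) \<le> shapley_u1 (r x', g y)"
    if "x \<in> S1" "x' \<in> S1" "y \<in> S2" for x x' y
    using that col0 col1 col2 unfolding S1 S2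
    by (auto simp: r g shapley_u1_def numeral_2_eq_2)
  show "u2 (x, y) \<le> u2 (x, y') \<longleftrightarrow> shapley_u2 (r x, g y) \<le> shapley_u2 (r x, g y')"
    if "x \<in> S1" "y \<in> S2" "y' \<in> S2" for x y y'
    using that row0 row1 row2 unfolding S1 S2
    by (auto simp: r g shapley_u2_def numeral_2_eq_2)
qed

locale strategic_game =
  fixes S1 :: "'a set" and S2 :: "'b set" and u1 u2 :: "'a \<times> 'b \<Rightarrow> real"
begin

abbreviation arc :: "'a \<times> 'b \<Rightarrow> 'a \<times> 'b \<Rightarrow> bool" where
  "arc \<equiv> pref_arc S1 S2 u1 u2"

definition best_reply1 :: "'b \<Rightarrow> 'a \<Rightarrow> bool" where
  "best_reply1 c a \<longleftrightarrow> c \<in> S2 \<and> a \<in> S1 \<and> (\<forall>x\<in>S1. x \<noteq> a \<longrightarrow> u1 (x, c) < u1 (a, c))"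

definition best_reply2 :: "'a \<Rightarrow> 'b \<Rightarrow> bool" where
  "best_reply2 a c \<longleftrightarrow> a \<in> S1 \<and> c \<in> S2 \<and> (\<forall>y\<in>S2. y \<noteq> c \<longrightarrow> u2 (a, y) < u2 (a, c))"

lemma has_sink_if_mutual_best_replies:
  assumes "best_reply1 c a" and "best_reply2 a c"
  shows "has_sink (S1 \<times> S2) arc"
  unfolding has_sink_def
proof (intro bexI notI)
  show "(a, c) \<in> S1 \<times> S2" using assms by (simp add: best_reply1_def)
  assume "\<exists>q\<in>S1 \<times> S2. arc (a, c) q"
  then obtain x y where "arc (a, c) (x, y)" by auto
  then show False
    using assms unfolding pref_arc_def comparable1_def comparable2_def
      best_reply1_def best_reply2_def
    by (auto simp: not_le)
qed

lemma has_4_cycleI: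
  assumes "a \<in> S1" "a' \<in> S1" "a \<noteq> a'" "c \<in> S2" "c' \<in> S2" "c \<noteq> c'"
    and "u1 (a, c) \<le> u1 (a', c)" "u2 (a', c) \<le> u2 (a', c')"
    and "u1 (a', c') \<le> u1 (a, c')" "u2 (a, c') \<le> u2 (a, c)"
  shows "has_4_cycle (S1 \<times> S2) arc"
  unfolding has_4_cycle_def
proof (intro bexI conjI)
  show "distinct [(a, c), (a', c), (a', c'), (a, c')]" using assms by auto
qed (use assms in \<open>auto simp: pref_arc_def comparable1_def comparable2_def\<close>)

lemma has_4_cycle_if_best_reply_square:
  assumes "best_reply2 a c" "best_reply1 c a'" "best_reply2 a' c'" "best_reply1 c' a"
    and "a \<noteq> a'" "c \<noteq> c'"
  shows "has_4_cycle (S1 \<times> S2) arc"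
  using assms by (intro has_4_cycleI[of a a' c c'])
    (auto simp: best_reply1_def best_reply2_def less_imp_le)

lemma u1_less_if_no_4_cycle:
  assumes "\<not> has_4_cycle (S1 \<times> S2) arc"
    and "a \<in> S1" "a' \<in> S1" "a \<noteq> a'" "c \<in> S2" "c' \<in> S2" "c \<noteq> c'"
    and "u2 (a', c) \<le> u2 (a', c')" "u1 (a', c') \<le> u1 (a, c')" "u2 (a, c') \<le> u2 (a, c)"
  shows "u1 (a', c) < u1 (a, c)"
  using assms has_4_cycleI[of a a' c c'] by force

lemma u2_less_if_no_4_cycle:
  assumes "\<not> has_4_cycle (S1 \<times> S2) arc"
    and "a \<in> S1" "a' \<in> S1" "a \<noteq> a'" "c \<in> S2" "c' \<in> S2" "c \<noteq> c'"
    and "u1 (a, c) \<le> u1 (a', c)" "u2 (a', c) \<le> u2 (a', c')" "u1 (a', c') \<le> u1 (a, c')"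
  shows "u2 (a, c) < u2 (a, c')"
  using assms has_4_cycleI[of a a' c c'] by force

end

locale finite_strict_game = strategic_game +
  assumes game: "two_player_game S1 S2 u1 u2" and strict: "strict_game S1 S2 u1 u2"
begin

lemma strict_u1:
  assumes "a \<in> S1" "a' \<in> S1" "a \<noteq> a'" "c \<in> S2"
  shows "u1 (a, c) \<noteq> u1 (a', c)"
proof -
  have "comparable1 (a, c) (a', c)" using assms by (simp add: comparable1_def)
  then show ?thesis using strict assms unfolding strict_game_def by blast
qed

lemma strict_u2:
  assumes "a \<in> S1" "c \<in> S2" "c' \<in> S2" "c \<noteq> c'"
  shows "u2 (a, c) \<noteq> u2 (a, c')"
proof -
  have "comparable2 (a, c) (a, c')" using assms by (simp add: comparable2_def)
  then show ?thesis using strict assms unfolding strict_game_def by blast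
qed

lemma best_reply1_exists:
  assumes "c \<in> S2"
  obtains a where "best_reply1 c a"
proof -
  let ?U = "(\<lambda>x. u1 (x, c)) ` S1"
  have "finite S1" "S1 \<noteq> {}" using game by (auto simp: two_player_game_def)
  then have "Max ?U \<in> ?U" by simp
  then obtain a where a: "a \<in> S1" "Max ?U = u1 (a, c)" by (rule imageE)
  have "u1 (x, c) < u1 (a, c)" if "x \<in> S1" "x \<noteq> a" for x
  proof -
    have "u1 (x, c) \<noteq> u1 (a, c)"
      using strict_u1 that a assms by blast
    moreover have "u1 (x, c) \<le> u1 (a, c)" using a(2)[symmetric] that \<open>finite S1\<close> by simp
    ultimately show ?thesis by simp
  qed
  with a assms show ?thesis by (intro that) (auto simp: best_reply1_def)
qed

lemma best_reply2_exists:
  assumes "a \<in> S1"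
  obtains c where "best_reply2 a c"
proof -
  let ?U = "(\<lambda>y. u2 (a, y)) ` S2"
  have "finite S2" "S2 \<noteq> {}" using game by (auto simp: two_player_game_def)
  then have "Max ?U \<in> ?U" by simp
  then obtain c where c: "c \<in> S2" "Max ?U = u2 (a, c)" by (rule imageE)
  have "u2 (a, y) < u2 (a, c)" if "y \<in> S2" "y \<noteq> c" for y
  proof -
    have "u2 (a, y) \<noteq> u2 (a, c)"
      using strict_u2 that c assms by blast
    moreover have "u2 (a, y) \<le> u2 (a, c)" using c(2)[symmetric] that \<open>finite S2\<close> by simp
    ultimately show ?thesis by simp
  qed
  with c assms show ?thesis by (intro that) (auto simp: best_reply2_def)
qed

lemma best_reply_walk:
  assumes no_sink: "\<not> has_sink (S1 \<times> S2) arc" and no_4_cycle: "\<not> has_4_cycle (S1 \<times> S2) arc"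
  obtains a0 a1 a2 b0 b1 b2 where
    "best_reply2 a0 b2" "best_reply1 b2 a1" "best_reply2 a1 b0" "best_reply1 b0 a2" "best_reply2 a2 b1"
    "distinct [a0, a1, a2]" "distinct [b0, b1, b2]"
proof -
  obtain a0 where "a0 \<in> S1" using game by (auto simp: two_player_game_def)
  then obtain b2 where b2: "best_reply2 a0 b2" by (rule best_reply2_exists)
  then obtain a1 where a1: "best_reply1 b2 a1" by (auto simp: best_reply2_def elim: best_reply1_exists)
  then obtain b0 where b0: "best_reply2 a1 b0" by (auto simp: best_reply1_def elim: best_reply2_exists)
  then obtain a2 where a2: "best_reply1 b0 a2" by (auto simp: best_reply2_def elim: best_reply1_exists)
  then obtain b1 where b1: "best_reply2 a2 b1" by (auto simp: best_reply1_def elim: best_reply2_exists)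
  have "a1 \<noteq> a0" "b0 \<noteq> b2" "a2 \<noteq> a1" "b1 \<noteq> b0"
    using has_sink_if_mutual_best_replies no_sink b2 a1 b0 a2 b1 by metis+
  moreover have "a2 \<noteq> a0"
    using has_4_cycle_if_best_reply_square[of a0 b2 a1 b0] no_4_cycle b2 a1 b0 a2 calculation by metis
  moreover have "b1 \<noteq> b2"
    using has_4_cycle_if_best_reply_square[of a2 b2 a1 b0] no_4_cycle a1 b0 a2 b1 calculation by metis
  ultimately show ?thesis using that b2 a1 b0 a2 b1 by simp
qed

lemma card_strategies_ge_3:
  assumes "\<not> has_sink (S1 \<times> S2) arc" and "\<not> has_4_cycle (S1 \<times> S2) arc"
  shows "card S1 \<ge> 3" and "card S2 \<ge> 3"
proof -
  obtain a0 a1 a2 b0 b1 b2 where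
    walk: "best_reply2 a0 b2" "best_reply1 b2 a1" "best_reply2 a1 b0" "best_reply1 b0 a2" "best_reply2 a2 b1"
    and "distinct [a0, a1, a2]" "distinct [b0, b1, b2]"
    using best_reply_walk[OF assms] .
  then have "card {a0, a1, a2} = 3" "card {b0, b1, b2} = 3" by auto
  moreover have "{a0, a1, a2} \<subseteq> S1" "{b0, b1, b2} \<subseteq> S2"
    using walk by (auto simp: best_reply1_def best_reply2_def)
  moreover have "finite S1" "finite S2" using game by (auto simp: two_player_game_def)
  ultimately show "card S1 \<ge> 3" "card S2 \<ge> 3" by (metis card_mono)+
qed

lemma digraph_iso_shapley_if_card_3:
  assumes no_sink: "\<not> has_sink (S1 \<times> S2) arc" and no_4_cycle: "\<not> has_4_cycle (S1 \<times> S2) arc"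
    and "card S1 = 3" and "card S2 = 3"
  shows "digraph_iso (S1 \<times> S2) arc (shapley_S \<times> shapley_S) shapley_arc"
proof -
  obtain a0 a1 a2 b0 b1 b2 where
    walk: "best_reply2 a0 b2" "best_reply1 b2 a1" "best_reply2 a1 b0" "best_reply1 b0 a2" "best_reply2 a2 b1"
    and distinct: "distinct [a0, a1, a2]" "distinct [b0, b1, b2]"
    using best_reply_walk[OF no_sink no_4_cycle] .
  have finite: "finite S1" "finite S2" using game by (auto simp: two_player_game_def)
  have mem: "a0 \<in> S1" "a1 \<in> S1" "a2 \<in> S1" "b0 \<in> S2" "b1 \<in> S2" "b2 \<in> S2"
    using walk by (auto simp: best_reply1_def best_reply2_def)
  have S1: "S1 = {a0, a1, a2}" and S2: "S2 = {b0, b1, b2}"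
    using card_subset_eq[OF finite(1), of "{a0, a1, a2}"] card_subset_eq[OF finite(2), of "{b0, b1, b2}"]
      mem distinct assms(3,4) by auto
  obtain a where a: "best_reply1 b1 a" using mem by (elim best_reply1_exists)
  have "a \<noteq> a2" using has_sink_if_mutual_best_replies[OF a] walk(5) no_sink by blast
  moreover have "a \<noteq> a1"
    using has_4_cycle_if_best_reply_square[of a1 b0 a2 b1] walk(3-5) a distinct no_4_cycle by auto
  moreover have "a \<in> S1" using a by (simp add: best_reply1_def)
  ultimately have closed: "best_reply1 b1 a0" using a S1 by auto
  note br = walk closed mem distinct
  txt \<open>Each remaining comparison, taken the other way, would close a 4-cycle with three best-reply arcs.\<close>
  have "u1 (a0, b0) < u1 (a1, b0)"
    using br by (intro u1_less_if_no_4_cycle[OF no_4_cycle, of a1 a0 b0 b2])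
      (auto simp: best_reply1_def best_reply2_def less_imp_le)
  moreover have "u1 (a1, b1) < u1 (a2, b1)"
    using br by (intro u1_less_if_no_4_cycle[OF no_4_cycle, of a2 a1 b1 b0])
      (auto simp: best_reply1_def best_reply2_def less_imp_le)
  moreover have "u1 (a2, b2) < u1 (a0, b2)"
    using br by (intro u1_less_if_no_4_cycle[OF no_4_cycle, of a0 a2 b2 b1])
      (auto simp: best_reply1_def best_reply2_def less_imp_le)
  moreover have "u2 (a0, b0) < u2 (a0, b1)"
    using br by (intro u2_less_if_no_4_cycle[OF no_4_cycle, of a0 a2 b0 b1])
      (auto simp: best_reply1_def best_reply2_def less_imp_le)
  moreover have "u2 (a1, b1) < u2 (a1, b2)"
    using br by (intro u2_less_if_no_4_cycle[OF no_4_cycle, of a1 a0 b1 b2])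
      (auto simp: best_reply1_def best_reply2_def less_imp_le)
  moreover have "u2 (a2, b2) < u2 (a2, b0)"
    using br by (intro u2_less_if_no_4_cycle[OF no_4_cycle, of a2 a1 b2 b0])
      (auto simp: best_reply1_def best_reply2_def less_imp_le)
  ultimately show ?thesis
    using br by (intro digraph_iso_shapley[OF S1 S2 distinct]) (auto simp: best_reply1_def best_reply2_def)
qed

end

theorem mainTheorem1:
  fixes S1 :: "'a set" and S2 :: "'b set" and u1 u2 :: "'a \<times> 'b \<Rightarrow> real"
  assumes "two_player_game S1 S2 u1 u2"
    and "strict_game S1 S2 u1 u2"
    and "\<not> has_sink (S1 \<times> S2) (pref_arc S1 S2 u1 u2)"
    and "\<not> has_4_cycle (S1 \<times> S2) (pref_arc S1 S2 u1 u2)"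
  shows "card S1 \<ge> 3 \<and> card S2 \<ge> 3 \<and>
    (card S1 = 3 \<and> card S2 = 3 \<longrightarrow>
       digraph_iso (S1 \<times> S2) (pref_arc S1 S2 u1 u2) (shapley_S \<times> shapley_S) shapley_arc)"
proof -
  interpret finite_strict_game S1 S2 u1 u2
    using assms(1,2) by unfold_locales
  show ?thesis
    using card_strategies_ge_3[OF assms(3,4)] digraph_iso_shapley_if_card_3[OF assms(3,4)] by blast
qed

end
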